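(* Let $a>0$ be a constant and consider the (3+1)-dimensional Zakharov–Kuznetsov equation $$u_t + a\,u\,u_x + u_{xx} + u_{yy} + u_{zz} = 0$$ for $u=u(x,y,z,t)$. The infinitesimal generators $\xi_x\partial_x+\xi_y\partial_y+\xi_z\partial_z+\xi_t\partial_t+\xi_u\partial_u$ of the one-parameter Lie groups of point transformations $(x,y,z,t,u)\mapsto(\hat x,\hat y,\hat z,\hat t,\hat u)$ leaving this equation invariant are exactly those with $$\xi_x=\tfrac{c_1x}{2}+c_5t+c_6,\quad \xi_y=\tfrac{c_1y}{2}+c_3z+c_4,\quad \xi_z=-c_3y+\tfrac{c_1z}{2}+c_7,\quad \xi_t=c_1t+c_2,\quad \xi_u=-\tfrac{c_1u}{2}+\tfrac{c_5}{a},$$ where $c_1,\dots,c_7$ are arbitrary real constants. Equivalently, the Lie algebra of point symmetries is spanned by $\mathfrak{D}_1=\frac{x}{2}\partial_x+\frac{y}{2}\partial_y+\frac{z}{2}\partial_z+t\partial_t-\frac{u}{2}\partial_u$, $\mathfrak{D}_2=\partial_t$, $\mathfrak{D}_3=z\partial_y-y\partial_z$, $\mathfrak{D}_4=\partial_y$, $\mathfrak{D}_5=t\partial_x+\frac{1}{a}\partial_u$, $\mathfrak{D}_6=\partial_x$, $\mathfrak{D}_7=\partial_z$.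
   Context: A vector field $\mathbb{Z}$ on the space of variables $(x,y,z,t,u)$ is an infinitesimal (point) symmetry of the equation $\Delta:=u_t+auu_x+u_{xx}+u_{yy}+u_{zz}=0$ if its second prolongation $\mathrm{Pr}^{(2)}\mathbb{Z}$ satisfies $\mathrm{Pr}^{(2)}\mathbb{Z}(\Delta)=0$ whenever $\Delta=0$. *)

theory Defs
  imports "HOL-Analysis.Analysis"
begin

text \<open>Independent variables (x,y,z,t) are a point of real^4,
 with indices 0 = x, 1 = y, 2 = z, 3 = t; the dependent variable u is a real.
 A vector field  Z = sum_i xi i d/dx_i + phi d/du  is given by coefficient
 functions  xi :: 4 => real^4 => real => real  and  phi :: real^4 => real => real.
 Second-order jet coordinates: u1 i = u_{x_i}, u2 i j = u_{x_i x_j} (symmetric).\<close>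

type_synonym coeff = "real^4 \<Rightarrow> real \<Rightarrow> real"

definition dx :: "4 \<Rightarrow> coeff \<Rightarrow> coeff" where
  "dx i f x u = deriv (\<lambda>s. f (x + s *\<^sub>R axis i 1) u) 0"

definition du :: "coeff \<Rightarrow> coeff" where
  "du f x u = deriv (\<lambda>s. f x (u + s)) 0"

datatype direction = DX "4" | DU

fun pd :: "direction \<Rightarrow> coeff \<Rightarrow> coeff" where
  "pd (DX i) f = dx i f"
| "pd DU f = du f"

fun pd_exists :: "direction \<Rightarrow> coeff \<Rightarrow> real^4 \<Rightarrow> real \<Rightarrow> bool" where
  "pd_exists (DX i) f x u = ((\<lambda>s. f (x + s *\<^sub>R axis i 1) u) differentiable (at 0))"
| "pd_exists DU f x u = ((\<lambda>s. f x (u + s)) differentiable (at 0))"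

fun Ck :: "nat \<Rightarrow> coeff \<Rightarrow> bool" where
  "Ck 0 f = continuous_on UNIV (\<lambda>p. f (fst p) (snd p))"
| "Ck (Suc k) f = (continuous_on UNIV (\<lambda>p. f (fst p) (snd p))
      \<and> (\<forall>d x u. pd_exists d f x u) \<and> (\<forall>d. Ck k (pd d f)))"

definition smooth_coeff :: "coeff \<Rightarrow> bool" where
  "smooth_coeff f = (\<forall>k. Ck k f)"

definition TD1 :: "4 \<Rightarrow> coeff \<Rightarrow> real^4 \<Rightarrow> real \<Rightarrow> (4 \<Rightarrow> real) \<Rightarrow> real" where
  "TD1 j F x u u1 = dx j F x u + du F x u * u1 j"

definition TD2 :: "4 \<Rightarrow> 4 \<Rightarrow> coeff \<Rightarrow> real^4 \<Rightarrow> real \<Rightarrow> (4 \<Rightarrow> real) \<Rightarrow> (4 \<Rightarrow> 4 \<Rightarrow> real) \<Rightarrow> real" where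
  "TD2 i j F x u u1 u2 =
     dx j (dx i F) x u + du (dx i F) x u * u1 j + dx j (du F) x u * u1 i
     + du (du F) x u * u1 i * u1 j + du F x u * u2 i j"

definition phi1 :: "(4 \<Rightarrow> coeff) \<Rightarrow> coeff \<Rightarrow> 4 \<Rightarrow> real^4 \<Rightarrow> real \<Rightarrow> (4 \<Rightarrow> real) \<Rightarrow> real" where
  "phi1 \<xi> \<phi> i x u u1 = TD1 i \<phi> x u u1 - (\<Sum>k\<in>UNIV. TD1 i (\<xi> k) x u u1 * u1 k)"

definition phi2 :: "(4 \<Rightarrow> coeff) \<Rightarrow> coeff \<Rightarrow> 4 \<Rightarrow> 4 \<Rightarrow> real^4 \<Rightarrow> real \<Rightarrow> (4 \<Rightarrow> real) \<Rightarrow> (4 \<Rightarrow> 4 \<Rightarrow> real) \<Rightarrow> real" where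
  "phi2 \<xi> \<phi> i j x u u1 u2 =
     TD2 i j \<phi> x u u1 u2
     - (\<Sum>k\<in>UNIV. TD2 i j (\<xi> k) x u u1 u2 * u1 k + TD1 i (\<xi> k) x u u1 * u2 k j
                   + TD1 j (\<xi> k) x u u1 * u2 i k)"

definition zk_delta :: "real \<Rightarrow> real \<Rightarrow> (4 \<Rightarrow> real) \<Rightarrow> (4 \<Rightarrow> 4 \<Rightarrow> real) \<Rightarrow> real" where
  "zk_delta a u u1 u2 = u1 3 + a * u * u1 0 + u2 0 0 + u2 1 1 + u2 2 2"

text \<open>Pr^(2) Z applied to Delta (Delta has no explicit x,y,z,t dependence, so the xi-terms vanish):
  phi^t + a phi u_x + a u phi^x + phi^{xx} + phi^{yy} + phi^{zz}.\<close>
definition pr2_zk :: "real \<Rightarrow> (4 \<Rightarrow> coeff) \<Rightarrow> coeff \<Rightarrow> real^4 \<Rightarrow> real \<Rightarrow> (4 \<Rightarrow> real) \<Rightarrow> (4 \<Rightarrow> 4 \<Rightarrow> real) \<Rightarrow> real" where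
  "pr2_zk a \<xi> \<phi> x u u1 u2 =
     phi1 \<xi> \<phi> 3 x u u1 + a * \<phi> x u * u1 0 + a * u * phi1 \<xi> \<phi> 0 x u u1
     + phi2 \<xi> \<phi> 0 0 x u u1 u2 + phi2 \<xi> \<phi> 1 1 x u u1 u2 + phi2 \<xi> \<phi> 2 2 x u u1 u2"

definition is_zk_symmetry :: "real \<Rightarrow> (4 \<Rightarrow> coeff) \<Rightarrow> coeff \<Rightarrow> bool" where
  "is_zk_symmetry a \<xi> \<phi> =
     (\<forall>x u u1 u2. (\<forall>i j. u2 i j = u2 j i) \<longrightarrow> zk_delta a u u1 u2 = 0
        \<longrightarrow> pr2_zk a \<xi> \<phi> x u u1 u2 = 0)"

end

theory Submission
  imports Defs
begin

text \<open>
  On the equation manifold \<open>u\<^sub>t\<close> is a function of the other jet coordinates, so the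
  prolonged vector field applied to \<open>\<Delta>\<close> becomes a polynomial in the remaining first- and
  second-order jet variables; its coefficients are the determining equations. The second-order
  ones make \<open>\<xi>\<close> independent of \<open>u\<close>, \<open>\<xi>\<^sup>t\<close> a function of \<open>t\<close> alone, \<open>\<phi>\<close> affine in \<open>u\<close>,
  and the spatial part of \<open>\<xi>\<close> a conformal Killing field whose factor \<open>\<partial>\<^sub>t\<xi>\<^sup>t / 2\<close> does not
  depend on \<open>x, y, z\<close>. Since \<open>a \<noteq> 0\<close>, the \<open>u\<^sub>x\<close>-, \<open>u\<^sub>y\<close>- and \<open>u\<^sub>z\<close>-equations then give
  \<open>\<partial>\<^sub>u\<phi> = -\<partial>\<^sub>t\<xi>\<^sup>t / 2\<close>, \<open>\<partial>\<^sub>x\<xi>\<^sup>y = \<partial>\<^sub>x\<xi>\<^sup>z = 0\<close> (only the rotation in the \<open>(y, z)\<close>-plane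
  survives) and \<open>\<partial>\<^sub>t\<xi>\<^sup>x = a \<phi>(\<cdot>, 0)\<close>, and the zeroth-order equation makes \<open>\<phi>(\<cdot>, 0)\<close>
  constant. Integrating these relations along coordinate lines by the mean value theorem leaves
  exactly the seven-parameter affine family; conversely, for that family the prolongation is
  computed directly.
\<close>

section \<open>Derivatives along coordinate lines\<close>

abbreviation unit_axis :: "4 \<Rightarrow> real^4" where
  "unit_axis i \<equiv> axis i 1"

lemma index4_cases: "(k::4) = 0 \<or> k = 1 \<or> k = 2 \<or> k = 3"
  using exhaust_4[of k] by auto

lemma sum_UNIV_4: "sum f (UNIV::4 set) = f 0 + f 1 + f 2 + f 3"
proof -
  have four: "(4::4) = 0" by simp
  show ?thesis unfolding sum_4 four by (simp add: ac_simps)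
qed

lemma vector_4_eq_sum_axes:
  "(y::real^4) = 0 + y$0 *\<^sub>R unit_axis 0 + y$1 *\<^sub>R unit_axis 1 + y$2 *\<^sub>R unit_axis 2 + y$3 *\<^sub>R unit_axis 3"
  by (simp add: vec_eq_iff axis_def) (metis index4_cases)

lemma smooth_coeff_pd: "smooth_coeff f \<Longrightarrow> smooth_coeff (pd d f)"
  unfolding smooth_coeff_def by (metis Ck.simps(2))

lemma smooth_coeff_dx: "smooth_coeff f \<Longrightarrow> smooth_coeff (dx i f)"
  using smooth_coeff_pd[of f "DX i"] by simp

lemma smooth_coeff_du: "smooth_coeff f \<Longrightarrow> smooth_coeff (du f)"
  using smooth_coeff_pd[of f DU] by simp

lemma smooth_coeff_pd_exists: "smooth_coeff f \<Longrightarrow> pd_exists d f x u"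
  unfolding smooth_coeff_def by (metis Ck.simps(2))

lemma dx_const [simp]: "dx i (\<lambda>_ _. c) = (\<lambda>_ _. 0)"
  by (simp add: dx_def fun_eq_iff)

lemma du_const [simp]: "du (\<lambda>_ _. c) = (\<lambda>_ _. 0)"
  by (simp add: du_def fun_eq_iff)

lemma dx_at_u0: "dx j (\<lambda>y u. F y 0) = (\<lambda>y u. dx j F y 0)"
  by (simp add: dx_def fun_eq_iff)

definition differentiable_along :: "4 \<Rightarrow> coeff \<Rightarrow> bool" where
  "differentiable_along i F \<longleftrightarrow> (\<forall>y u. (\<lambda>s. F (y + s *\<^sub>R unit_axis i) u) differentiable (at 0))"

lemma smooth_coeff_differentiable_along: "smooth_coeff F \<Longrightarrow> differentiable_along i F"
  unfolding differentiable_along_def using smooth_coeff_pd_exists[of F "DX i"] by simp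

lemma differentiable_along_at_u0: "differentiable_along i F \<Longrightarrow> differentiable_along i (\<lambda>y u. F y 0)"
  unfolding differentiable_along_def by blast

lemma has_real_derivative_along:
  assumes "differentiable_along i F"
  shows "((\<lambda>s. F (y + s *\<^sub>R unit_axis i) u) has_real_derivative dx i F (y + s *\<^sub>R unit_axis i) u) (at s)"
proof -
  let ?y = "y + s *\<^sub>R unit_axis i"
  have "((\<lambda>r. F (?y + r *\<^sub>R unit_axis i) u) has_real_derivative dx i F ?y u) (at 0)"
    using assms unfolding differentiable_along_def dx_def
    by (simp add: DERIV_deriv_iff_real_differentiable)
  moreover have "(\<lambda>r. F (?y + r *\<^sub>R unit_axis i) u) = (\<lambda>r. F (y + (r + s) *\<^sub>R unit_axis i) u)"
    by (simp add: scaleR_add_left algebra_simps)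
  ultimately show ?thesis
    using DERIV_shift[of "\<lambda>s. F (y + s *\<^sub>R unit_axis i) u" _ 0 s] by simp
qed

lemma has_real_derivative_in_u:
  assumes "smooth_coeff F"
  shows "(F y has_real_derivative du F y s) (at s)"
proof -
  have "((\<lambda>r. F y (s + r)) has_real_derivative du F y s) (at 0)"
    using smooth_coeff_pd_exists[OF assms, of DU y s] unfolding du_def
    by (simp add: DERIV_deriv_iff_real_differentiable)
  then show ?thesis
    using DERIV_shift[of "F y" _ 0 s] by (simp add: add.commute)
qed

lemma affine_if_constant_derivative:
  fixes g :: "real \<Rightarrow> real"
  assumes "\<And>s. (g has_real_derivative c) (at s)"
  shows "g s = g 0 + c * s"
proof (cases "s = 0")
  case False
  then have "g s - g 0 = (s - 0) * c"
    by (intro DERIV_const_ratio_const assms) simp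
  then show ?thesis by (simp add: algebra_simps)
qed simp

definition invariant_along :: "4 \<Rightarrow> coeff \<Rightarrow> bool" where
  "invariant_along i F \<longleftrightarrow> (\<forall>y u s. F (y + s *\<^sub>R unit_axis i) u = F y u)"

definition invariant_in_u :: "coeff \<Rightarrow> bool" where
  "invariant_in_u F \<longleftrightarrow> (\<forall>y u s. F y (u + s) = F y u)"

lemma invariant_along_dx:
  assumes "invariant_along i F"
  shows "invariant_along i (dx j F)"
  unfolding invariant_along_def
proof (intro allI)
  fix y u s
  have "F (y + s *\<^sub>R unit_axis i + r *\<^sub>R unit_axis j) u = F (y + r *\<^sub>R unit_axis j) u" for r
    using assms unfolding invariant_along_def by (metis add.assoc add.commute)
  then show "dx j F (y + s *\<^sub>R unit_axis i) u = dx j F y u"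
    unfolding dx_def by simp
qed

lemma invariant_in_u_dx: "invariant_in_u F \<Longrightarrow> invariant_in_u (dx j F)"
  unfolding invariant_in_u_def dx_def by simp

lemma invariant_in_u_du:
  assumes "invariant_in_u F"
  shows "invariant_in_u (du F)"
  unfolding invariant_in_u_def
proof (intro allI)
  fix y u s
  have "F y (u + s + r) = F y (u + r)" for r
    using assms unfolding invariant_in_u_def by (metis add.assoc add.commute)
  then show "du F y (u + s) = du F y u"
    unfolding du_def by simp
qed

lemma dx_eq_0_if_invariant_along: "invariant_along i F \<Longrightarrow> dx i F y u = 0"
  unfolding invariant_along_def dx_def by simp

lemma du_eq_0_if_invariant_in_u: "invariant_in_u F \<Longrightarrow> du F y u = 0"
  unfolding invariant_in_u_def du_def by simp

lemma invariant_in_u_eq_at_u0: "invariant_in_u F \<Longrightarrow> F y u = F y 0"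
  unfolding invariant_in_u_def by (metis add_0)

lemma invariant_along_scaled:
  "(\<And>y u. F y u = c * G y u) \<Longrightarrow> invariant_along i G \<Longrightarrow> invariant_along i F"
  unfolding invariant_along_def by simp

lemma affine_along:
  assumes "differentiable_along i F" "\<And>y u. dx i F y u = G y u" "invariant_along i G"
  shows "F (y + s *\<^sub>R unit_axis i) u = F y u + s * G y u"
proof -
  have "((\<lambda>s. F (y + s *\<^sub>R unit_axis i) u) has_real_derivative G y u) (at r)" for r
    using has_real_derivative_along[OF assms(1)] assms(2,3) unfolding invariant_along_def by metis
  from affine_if_constant_derivative[OF this, of s] show ?thesis by (simp add: mult.commute)
qed

lemma invariant_along_if_dx_eq_0:
  assumes "differentiable_along i F" "\<And>y u. dx i F y u = 0"
  shows "invariant_along i F"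
  using affine_along[OF assms(1), of "\<lambda>_ _. 0"] assms(2) unfolding invariant_along_def by simp

lemma affine_in_u:
  assumes "smooth_coeff F" "invariant_in_u (du F)"
  shows "F y u = F y 0 + u * du F y 0"
proof -
  have "(F y has_real_derivative du F y 0) (at s)" for s
    using has_real_derivative_in_u[OF assms(1), of y s] invariant_in_u_eq_at_u0[OF assms(2), of y s]
    by simp
  from affine_if_constant_derivative[OF this, of u] show ?thesis by (simp add: mult.commute)
qed

lemma invariant_in_u_if_du_eq_0:
  assumes "smooth_coeff F" "\<And>y u. du F y u = 0"
  shows "invariant_in_u F"
proof -
  have "invariant_in_u (du F)" using assms(2) unfolding invariant_in_u_def by simp
  then show ?thesis
    using affine_in_u[OF assms(1)] assms(2) unfolding invariant_in_u_def by (metis mult_zero_right)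
qed

text \<open>This replaces the computation \<open>\<partial>\<^sub>i\<partial>\<^sub>j F = \<partial>\<^sub>j\<partial>\<^sub>i F = \<partial>\<^sub>j G = 0\<close>,
  avoiding the symmetry of second derivatives.\<close>
lemma invariant_along_dx_if_dx_invariant:
  assumes "differentiable_along i F" "differentiable_along j F"
    and "\<And>y u. dx i F y u = G y u" "invariant_along i G" "invariant_along j G"
  shows "invariant_along i (dx j F)"
  unfolding invariant_along_def
proof (intro allI)
  fix y u s
  have shifted: "(\<lambda>r. F (y + s *\<^sub>R unit_axis i + r *\<^sub>R unit_axis j) u)
      = (\<lambda>r. F (y + r *\<^sub>R unit_axis j) u + s * G y u)"
  proof
    fix r
    have "F (y + s *\<^sub>R unit_axis i + r *\<^sub>R unit_axis j) u
        = F ((y + r *\<^sub>R unit_axis j) + s *\<^sub>R unit_axis i) u"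
      by (simp add: algebra_simps)
    also have "\<dots> = F (y + r *\<^sub>R unit_axis j) u + s * G (y + r *\<^sub>R unit_axis j) u"
      by (rule affine_along[OF assms(1,3,4)])
    also have "G (y + r *\<^sub>R unit_axis j) u = G y u"
      using assms(5) unfolding invariant_along_def by blast
    finally show "F (y + s *\<^sub>R unit_axis i + r *\<^sub>R unit_axis j) u
        = F (y + r *\<^sub>R unit_axis j) u + s * G y u" .
  qed
  have "((\<lambda>r. F (y + r *\<^sub>R unit_axis j) u) has_real_derivative dx j F y u) (at 0)"
    using has_real_derivative_along[OF assms(2), where y=y and u=u and s=0] by simp
  from DERIV_add[OF this DERIV_const[of "s * G y u"]]
  have "((\<lambda>r. F (y + r *\<^sub>R unit_axis j) u + s * G y u) has_real_derivative dx j F y u) (at 0)"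
    by simp
  then show "dx j F (y + s *\<^sub>R unit_axis i) u = dx j F y u"
    unfolding dx_def[of j F "y + s *\<^sub>R unit_axis i"] shifted by (rule DERIV_imp_deriv)
qed

lemma dx_affine_in_u:
  assumes "smooth_coeff F" "smooth_coeff H" "\<And>y u. F y u = F y 0 + u * H y 0"
  shows "dx j F y u = dx j F y 0 + u * dx j H y 0"
proof -
  have line: "(\<lambda>s. F (y + s *\<^sub>R unit_axis j) u)
      = (\<lambda>s. F (y + s *\<^sub>R unit_axis j) 0 + u * H (y + s *\<^sub>R unit_axis j) 0)"
    by (rule ext) (rule assms(3))
  have "((\<lambda>s. F (y + s *\<^sub>R unit_axis j) 0) has_real_derivative dx j F y 0) (at 0)"
    and "((\<lambda>s. H (y + s *\<^sub>R unit_axis j) 0) has_real_derivative dx j H y 0) (at 0)"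
    using has_real_derivative_along[OF smooth_coeff_differentiable_along, where y=y and u=0 and s=0]
      assms(1,2) by simp_all
  then have "((\<lambda>s. F (y + s *\<^sub>R unit_axis j) 0 + u * H (y + s *\<^sub>R unit_axis j) 0)
      has_real_derivative dx j F y 0 + u * dx j H y 0) (at 0)"
    by (intro DERIV_add DERIV_cmult)
  then show ?thesis
    unfolding dx_def[of j F y u] line by (rule DERIV_imp_deriv)
qed

lemma du_affine_in_u:
  assumes "\<And>y u. F y u = F y 0 + u * H y 0"
  shows "du F y u = H y 0"
proof -
  have line: "(\<lambda>s. F y (u + s)) = (\<lambda>s. F y 0 + (u + s) * H y 0)"
    by (rule ext) (rule assms)
  have "((\<lambda>s. F y 0 + (u + s) * H y 0) has_real_derivative H y 0) (at 0)"
    by (auto intro!: derivative_eq_intros)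
  then show ?thesis
    unfolding du_def line by (rule DERIV_imp_deriv)
qed

lemma affine_if_affine_along:
  assumes "\<And>i y u s. F (y + s *\<^sub>R unit_axis i) u = F y u + s * c i" "invariant_in_u F"
  shows "F y u = F 0 0 + c 0 * y$0 + c 1 * y$1 + c 2 * y$2 + c 3 * y$3"
proof -
  have "F y u = F (0 + y$0 *\<^sub>R unit_axis 0 + y$1 *\<^sub>R unit_axis 1 + y$2 *\<^sub>R unit_axis 2
      + y$3 *\<^sub>R unit_axis 3) u"
    by (rule arg_cong[where f="\<lambda>v. F v u"]) (rule vector_4_eq_sum_axes)
  also have "\<dots> = F 0 u + c 0 * y$0 + c 1 * y$1 + c 2 * y$2 + c 3 * y$3"
    by (simp only: assms(1)) (simp add: algebra_simps)
  also have "F 0 u = F 0 0"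
    by (rule invariant_in_u_eq_at_u0[OF assms(2)])
  finally show ?thesis .
qed

lemma affine_if_dx_const:
  assumes "\<And>i. differentiable_along i F" "\<And>i y u. dx i F y u = c i" "invariant_in_u F"
  shows "F y u = F 0 0 + c 0 * y$0 + c 1 * y$1 + c 2 * y$2 + c 3 * y$3"
proof (rule affine_if_affine_along[OF _ assms(3)])
  fix i y u s
  show "F (y + s *\<^sub>R unit_axis i) u = F y u + s * c i"
    using affine_along[OF assms(1), where G="\<lambda>_ _. c i"] assms(2) by (simp add: invariant_along_def)
qed

lemma const_if_invariant:
  assumes "\<And>i. invariant_along i F" "invariant_in_u F"
  shows "F y u = F 0 0"
  using affine_if_affine_along[of F "\<lambda>_. 0"] assms unfolding invariant_along_def by simp

section \<open>The determining equations\<close>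

definition sym_jet2 :: "(4 \<Rightarrow> 4 \<Rightarrow> real) \<Rightarrow> 4 \<Rightarrow> 4 \<Rightarrow> real" where
  "sym_jet2 Q i j = Q i j + Q j i"

definition solved_jet1 :: "real \<Rightarrow> real \<Rightarrow> (4 \<Rightarrow> real) \<Rightarrow> (4 \<Rightarrow> 4 \<Rightarrow> real) \<Rightarrow> 4 \<Rightarrow> real" where
  "solved_jet1 a u P Q i =
     (if i = 3 then - (a * u * P 0 + sym_jet2 Q 0 0 + sym_jet2 Q 1 1 + sym_jet2 Q 2 2) else P i)"

text \<open>The jets \<open>(u, solved_jet1 a u P Q, sym_jet2 Q)\<close>, with \<open>P\<close> and \<open>Q\<close> arbitrary, are
  exactly the symmetric jets on which \<open>\<Delta>\<close> vanishes: \<open>u\<^sub>t\<close> is solved for.\<close>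
lemma pr2_zk_eq_0_on_solutions:
  "is_zk_symmetry a \<xi> \<phi> \<Longrightarrow> pr2_zk a \<xi> \<phi> x u (solved_jet1 a u P Q) (sym_jet2 Q) = 0"
  unfolding is_zk_symmetry_def zk_delta_def by (auto simp: solved_jet1_def sym_jet2_def)

definition coord_vector :: "4 \<Rightarrow> real \<Rightarrow> 4 \<Rightarrow> real" where
  "coord_vector i c k = (if k = i then c else 0)"

definition coord_matrix :: "4 \<Rightarrow> 4 \<Rightarrow> 4 \<Rightarrow> 4 \<Rightarrow> real" where
  "coord_matrix i j k l = (if k = i \<and> l = j then 1 else 0)"

lemmas jet_simps = pr2_zk_def phi1_def phi2_def TD1_def TD2_def sum_UNIV_4
  solved_jet1_def sym_jet2_def coord_vector_def coord_matrix_def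

locale zk_symmetry =
  fixes a :: real and \<xi> :: "4 \<Rightarrow> coeff" and \<phi> :: coeff
  assumes a_pos: "a > 0"
    and smooth_xi: "\<And>i. smooth_coeff (\<xi> i)" and smooth_phi: "smooth_coeff \<phi>"
    and symmetry: "is_zk_symmetry a \<xi> \<phi>"
begin

text \<open>Each determining equation is the coefficient of one monomial in the free jet variables
  \<open>P\<close>, \<open>Q\<close>; it is isolated by evaluating the prolongation at the zero jet and at a few
  coordinate jets and comparing.\<close>
lemma pr2_vanishes: "pr2_zk a \<xi> \<phi> x u (solved_jet1 a u P Q) (sym_jet2 Q) = 0"
  using symmetry by (rule pr2_zk_eq_0_on_solutions)

lemma du_xi: "du (\<xi> k) x u = 0"
proof -
  have "du (\<xi> 0) x u = 0"
    using pr2_vanishes[of x u "\<lambda>_. 0" "\<lambda>_ _. 0"] pr2_vanishes[of x u "\<lambda>_. 0" "coord_matrix 0 1"]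
      pr2_vanishes[of x u "coord_vector 1 1" "\<lambda>_ _. 0"] pr2_vanishes[of x u "coord_vector 1 1" "coord_matrix 0 1"]
    by (simp add: jet_simps)
  moreover have "du (\<xi> 1) x u = 0"
    using pr2_vanishes[of x u "\<lambda>_. 0" "\<lambda>_ _. 0"] pr2_vanishes[of x u "\<lambda>_. 0" "coord_matrix 1 2"]
      pr2_vanishes[of x u "coord_vector 2 1" "\<lambda>_ _. 0"] pr2_vanishes[of x u "coord_vector 2 1" "coord_matrix 1 2"]
    by (simp add: jet_simps)
  moreover have "du (\<xi> 2) x u = 0"
    using pr2_vanishes[of x u "\<lambda>_. 0" "\<lambda>_ _. 0"] pr2_vanishes[of x u "\<lambda>_. 0" "coord_matrix 1 2"]
      pr2_vanishes[of x u "coord_vector 1 1" "\<lambda>_ _. 0"] pr2_vanishes[of x u "coord_vector 1 1" "coord_matrix 1 2"]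
    by (simp add: jet_simps)
  moreover have "du (\<xi> 3) x u = 0"
    using pr2_vanishes[of x u "\<lambda>_. 0" "\<lambda>_ _. 0"] pr2_vanishes[of x u "\<lambda>_. 0" "coord_matrix 1 3"]
      pr2_vanishes[of x u "coord_vector 1 1" "\<lambda>_ _. 0"] pr2_vanishes[of x u "coord_vector 1 1" "coord_matrix 1 3"]
    by (simp add: jet_simps)
  ultimately show ?thesis
    using index4_cases[of k] by auto
qed

lemma dx_space_xi_t: "dx 0 (\<xi> 3) x u = 0" "dx 1 (\<xi> 3) x u = 0" "dx 2 (\<xi> 3) x u = 0"
  using pr2_vanishes[of x u "\<lambda>_. 0" "\<lambda>_ _. 0"] pr2_vanishes[of x u "\<lambda>_. 0" "coord_matrix 0 3"]
    pr2_vanishes[of x u "\<lambda>_. 0" "coord_matrix 1 3"] pr2_vanishes[of x u "\<lambda>_. 0" "coord_matrix 2 3"]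
  by (simp_all add: jet_simps)

lemma xi_space_killing:
  "dx 0 (\<xi> 1) x u = - dx 1 (\<xi> 0) x u"
  "dx 0 (\<xi> 2) x u = - dx 2 (\<xi> 0) x u"
  "dx 1 (\<xi> 2) x u = - dx 2 (\<xi> 1) x u"
  using pr2_vanishes[of x u "\<lambda>_. 0" "\<lambda>_ _. 0"] pr2_vanishes[of x u "\<lambda>_. 0" "coord_matrix 0 1"]
    pr2_vanishes[of x u "\<lambda>_. 0" "coord_matrix 0 2"] pr2_vanishes[of x u "\<lambda>_. 0" "coord_matrix 1 2"]
  by (simp_all add: jet_simps)

lemma differentiable_along_xi: "differentiable_along i (\<xi> k)"
  by (rule smooth_coeff_differentiable_along[OF smooth_xi])

lemma xi_invariant_in_u: "invariant_in_u (\<xi> k)"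
  by (rule invariant_in_u_if_du_eq_0[OF smooth_xi du_xi])

lemma xi_at_u0:
  "\<xi> k y u = \<xi> k y 0"
  "dx i (\<xi> k) y u = dx i (\<xi> k) y 0"
  "dx i (dx j (\<xi> k)) y u = dx i (dx j (\<xi> k)) y 0"
  by (rule invariant_in_u_eq_at_u0 invariant_in_u_dx xi_invariant_in_u)+

lemma xi_t_invariant_along_space:
  "invariant_along 0 (\<xi> 3)" "invariant_along 1 (\<xi> 3)" "invariant_along 2 (\<xi> 3)"
  by (rule invariant_along_if_dx_eq_0[OF differentiable_along_xi]; rule dx_space_xi_t)+

lemma du_du_xi: "du (du (\<xi> k)) x u = 0"
  by (rule du_eq_0_if_invariant_in_u[OF invariant_in_u_du[OF xi_invariant_in_u]])

lemma du_dx_xi: "du (dx i (\<xi> k)) x u = 0"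
  by (rule du_eq_0_if_invariant_in_u[OF invariant_in_u_dx[OF xi_invariant_in_u]])

lemma dx_du_xi: "dx i (du (\<xi> k)) x u = 0"
proof -
  have "du (\<xi> k) = (\<lambda>_ _. 0)" by (intro ext) (rule du_xi)
  then show ?thesis by simp
qed

lemma dx_dx_space_xi_t:
  "dx 0 (dx 0 (\<xi> 3)) x u = 0" "dx 1 (dx 1 (\<xi> 3)) x u = 0" "dx 2 (dx 2 (\<xi> 3)) x u = 0"
  by (rule dx_eq_0_if_invariant_along invariant_along_dx xi_t_invariant_along_space)+

lemmas xi_jet_simps = du_xi du_du_xi du_dx_xi dx_du_xi dx_dx_space_xi_t dx_space_xi_t

lemma du_du_phi: "du (du \<phi>) x u = 0"
  using pr2_vanishes[of x u "coord_vector 1 1" "\<lambda>_ _. 0"] pr2_vanishes[of x u "coord_vector 1 (-1)" "\<lambda>_ _. 0"]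
    pr2_vanishes[of x u "\<lambda>_. 0" "\<lambda>_ _. 0"]
  by (simp add: jet_simps xi_jet_simps) (simp add: algebra_simps; linarith)

lemma xi_space_dilation:
  "2 * dx 0 (\<xi> 0) x u = dx 3 (\<xi> 3) x u"
  "2 * dx 1 (\<xi> 1) x u = dx 3 (\<xi> 3) x u"
  "2 * dx 2 (\<xi> 2) x u = dx 3 (\<xi> 3) x u"
  using pr2_vanishes[of x u "\<lambda>_. 0" "\<lambda>_ _. 0"] pr2_vanishes[of x u "\<lambda>_. 0" "coord_matrix 0 0"]
    pr2_vanishes[of x u "\<lambda>_. 0" "coord_matrix 1 1"] pr2_vanishes[of x u "\<lambda>_. 0" "coord_matrix 2 2"]
  by (simp_all add: jet_simps xi_jet_simps)

lemma determining_eq_ux: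
  "a * u * dx 3 (\<xi> 3) x u - dx 3 (\<xi> 0) x u + a * \<phi> x u - a * u * dx 0 (\<xi> 0) x u
   + du (dx 0 \<phi>) x u + dx 0 (du \<phi>) x u
   - (dx 0 (dx 0 (\<xi> 0)) x u + dx 1 (dx 1 (\<xi> 0)) x u + dx 2 (dx 2 (\<xi> 0)) x u) = 0"
  using pr2_vanishes[of x u "coord_vector 0 1" "\<lambda>_ _. 0"] pr2_vanishes[of x u "\<lambda>_. 0" "\<lambda>_ _. 0"]
    du_du_phi[of x u]
  by (simp add: jet_simps xi_jet_simps) (simp add: algebra_simps; linarith)

lemma determining_eq_uy:
  "- dx 3 (\<xi> 1) x u - a * u * dx 0 (\<xi> 1) x u + du (dx 1 \<phi>) x u + dx 1 (du \<phi>) x u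
   - (dx 0 (dx 0 (\<xi> 1)) x u + dx 1 (dx 1 (\<xi> 1)) x u + dx 2 (dx 2 (\<xi> 1)) x u) = 0"
  using pr2_vanishes[of x u "coord_vector 1 1" "\<lambda>_ _. 0"] pr2_vanishes[of x u "\<lambda>_. 0" "\<lambda>_ _. 0"]
    du_du_phi[of x u]
  by (simp add: jet_simps xi_jet_simps) (simp add: algebra_simps; linarith)

lemma determining_eq_uz:
  "- dx 3 (\<xi> 2) x u - a * u * dx 0 (\<xi> 2) x u + du (dx 2 \<phi>) x u + dx 2 (du \<phi>) x u
   - (dx 0 (dx 0 (\<xi> 2)) x u + dx 1 (dx 1 (\<xi> 2)) x u + dx 2 (dx 2 (\<xi> 2)) x u) = 0"
  using pr2_vanishes[of x u "coord_vector 2 1" "\<lambda>_ _. 0"] pr2_vanishes[of x u "\<lambda>_. 0" "\<lambda>_ _. 0"]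
    du_du_phi[of x u]
  by (simp add: jet_simps xi_jet_simps) (simp add: algebra_simps; linarith)

lemma determining_eq_const:
  "dx 3 \<phi> x u + a * u * dx 0 \<phi> x u + dx 0 (dx 0 \<phi>) x u + dx 1 (dx 1 \<phi>) x u + dx 2 (dx 2 \<phi>) x u = 0"
  using pr2_vanishes[of x u "\<lambda>_. 0" "\<lambda>_ _. 0"] by (simp add: jet_simps xi_jet_simps)

section \<open>Solving the determining equations\<close>

lemma du_phi_invariant_in_u: "invariant_in_u (du \<phi>)"
  by (rule invariant_in_u_if_du_eq_0[OF smooth_coeff_du[OF smooth_phi] du_du_phi])

lemma phi_affine_in_u: "\<phi> y u = \<phi> y 0 + u * du \<phi> y 0"
  by (rule affine_in_u[OF smooth_phi du_phi_invariant_in_u])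

lemma dx_phi_affine_in_u: "dx j \<phi> y u = dx j \<phi> y 0 + u * dx j (du \<phi>) y 0"
  by (rule dx_affine_in_u[OF smooth_phi smooth_coeff_du[OF smooth_phi] phi_affine_in_u])

lemma du_dx_phi: "du (dx j \<phi>) y u = dx j (du \<phi>) y 0"
  by (rule du_affine_in_u) (rule dx_phi_affine_in_u)

lemma dx_dx_phi_affine_in_u: "dx i (dx j \<phi>) y u = dx i (dx j \<phi>) y 0 + u * dx i (dx j (du \<phi>)) y 0"
  by (rule dx_affine_in_u[OF smooth_coeff_dx[OF smooth_phi] smooth_coeff_dx[OF smooth_coeff_du[OF smooth_phi]]
        dx_phi_affine_in_u])

lemma du_phi_at_u0: "du \<phi> y u = du \<phi> y 0" "dx j (du \<phi>) y u = dx j (du \<phi>) y 0"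
  by (rule invariant_in_u_eq_at_u0 invariant_in_u_dx du_phi_invariant_in_u)+

text \<open>The coefficient of \<open>u\<close> in the \<open>u\<^sub>x\<close>-equation.\<close>
lemma du_phi: "du \<phi> y u = - dx 3 (\<xi> 3) y u / 2"
proof -
  have diag: "2 * (a * dx 0 (\<xi> 0) y 0) = a * dx 3 (\<xi> 3) y 0"
    using xi_space_dilation(1)[of y 0] by (metis mult.left_commute)
  have "2 * (a * du \<phi> y 0) + a * dx 3 (\<xi> 3) y 0 = 0"
    using determining_eq_ux[where x=y and u=1] determining_eq_ux[where x=y and u=0]
    by (simp add: phi_affine_in_u[of y 1] du_dx_phi du_phi_at_u0(2)[where u=1] xi_at_u0[where u=1])
      (simp add: algebra_simps, use diag in linarith)
  then have "a * (2 * du \<phi> y 0 + dx 3 (\<xi> 3) y 0) = 0"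
    by (simp add: algebra_simps)
  with a_pos have "2 * du \<phi> y 0 + dx 3 (\<xi> 3) y 0 = 0"
    by simp
  then show ?thesis
    using du_phi_at_u0(1)[of y u] xi_at_u0(2)[of 3 3 y u] by linarith
qed

lemma dx_x_xi_yz: "dx 0 (\<xi> 1) y u = 0" "dx 0 (\<xi> 2) y u = 0"
proof -
  have "a * dx 0 (\<xi> 1) y 0 = 0"
    using determining_eq_uy[of y 1] determining_eq_uy[of y 0]
    by (simp add: du_dx_phi du_phi_at_u0(2)[where u=1] xi_at_u0[where u=1]) (simp add: algebra_simps; linarith)
  then show "dx 0 (\<xi> 1) y u = 0" using a_pos xi_at_u0(2)[of 0 1 y u] by simp
  have "a * dx 0 (\<xi> 2) y 0 = 0"
    using determining_eq_uz[of y 1] determining_eq_uz[of y 0]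
    by (simp add: du_dx_phi du_phi_at_u0(2)[where u=1] xi_at_u0[where u=1]) (simp add: algebra_simps; linarith)
  then show "dx 0 (\<xi> 2) y u = 0" using a_pos xi_at_u0(2)[of 0 2 y u] by simp
qed

lemma dx_yz_xi_x: "dx 1 (\<xi> 0) y u = 0" "dx 2 (\<xi> 0) y u = 0"
  using xi_space_killing(1,2)[of y u] dx_x_xi_yz[of y u] by simp_all

lemma xi_yz_invariant_along_x: "invariant_along 0 (\<xi> 1)" "invariant_along 0 (\<xi> 2)"
  by (rule invariant_along_if_dx_eq_0[OF differentiable_along_xi]; rule dx_x_xi_yz)+

lemma xi_x_invariant_along_yz: "invariant_along 1 (\<xi> 0)" "invariant_along 2 (\<xi> 0)"
  by (rule invariant_along_if_dx_eq_0[OF differentiable_along_xi]; rule dx_yz_xi_x)+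

lemma dx_t_xi_t_invariant_along_space: "i \<noteq> 3 \<Longrightarrow> invariant_along i (dx 3 (\<xi> 3))"
  using index4_cases[of i] xi_t_invariant_along_space by (auto intro: invariant_along_dx)

lemma half_dx_t_xi_t_invariant_along_space:
  "i \<noteq> 3 \<Longrightarrow> invariant_along i (\<lambda>y u. dx 3 (\<xi> 3) y u / 2)"
  by (rule invariant_along_scaled[where c="1/2", OF _ dx_t_xi_t_invariant_along_space]) simp_all

lemma du_phi_invariant_along_space: "i \<noteq> 3 \<Longrightarrow> invariant_along i (du \<phi>)"
  by (rule invariant_along_scaled[where c="-1/2", OF _ dx_t_xi_t_invariant_along_space])
    (simp_all add: du_phi)

lemma dx_space_du_phi: "dx 0 (du \<phi>) y u = 0" "dx 1 (du \<phi>) y u = 0" "dx 2 (du \<phi>) y u = 0"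
  by (rule dx_eq_0_if_invariant_along, rule du_phi_invariant_along_space, simp)+

lemma dx_diag_xi: "i \<noteq> 3 \<Longrightarrow> dx i (\<xi> i) y u = dx 3 (\<xi> 3) y u / 2"
  using index4_cases[of i] xi_space_dilation[of y u] by auto

lemma dx_diag_xi_invariant_along: "i \<noteq> 3 \<Longrightarrow> j \<noteq> 3 \<Longrightarrow> invariant_along j (dx i (\<xi> i))"
  by (rule invariant_along_scaled[where c=1, OF _ half_dx_t_xi_t_invariant_along_space])
    (simp_all add: dx_diag_xi)

text \<open>Morally \<open>\<partial>\<^sub>y\<partial>\<^sub>z\<xi>\<^sup>y = \<partial>\<^sub>z\<partial>\<^sub>y\<xi>\<^sup>y = 0\<close> and \<open>\<partial>\<^sub>z\<partial>\<^sub>y\<xi>\<^sup>z = \<partial>\<^sub>y\<partial>\<^sub>z\<xi>\<^sup>z = 0\<close>, because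
  \<open>\<partial>\<^sub>y\<xi>\<^sup>y = \<partial>\<^sub>z\<xi>\<^sup>z = \<partial>\<^sub>t\<xi>\<^sup>t / 2\<close>; the antisymmetry \<open>\<partial>\<^sub>z\<xi>\<^sup>y = -\<partial>\<^sub>y\<xi>\<^sup>z\<close> gives the other two.\<close>
lemma rotation_invariant_along_yz:
  assumes "i = 1 \<or> i = 2"
  shows "invariant_along i (dx 2 (\<xi> 1))" "invariant_along i (dx 1 (\<xi> 2))"
proof -
  have diag: "invariant_along 1 (dx 2 (\<xi> 1))" "invariant_along 2 (dx 1 (\<xi> 2))"
    by (rule invariant_along_dx_if_dx_invariant[OF differentiable_along_xi differentiable_along_xi
          dx_diag_xi half_dx_t_xi_t_invariant_along_space half_dx_t_xi_t_invariant_along_space]; simp)+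
  moreover have "invariant_along 2 (dx 2 (\<xi> 1))"
    by (rule invariant_along_scaled[where c="-1", OF _ diag(2)]) (simp add: xi_space_killing(3))
  moreover have "invariant_along 1 (dx 1 (\<xi> 2))"
    by (rule invariant_along_scaled[where c="-1", OF _ diag(1)]) (simp add: xi_space_killing(3))
  ultimately show "invariant_along i (dx 2 (\<xi> 1))" "invariant_along i (dx 1 (\<xi> 2))"
    using assms by auto
qed

lemma laplacian_terms_xi_yz:
  assumes "k = 1 \<or> k = 2" "i \<noteq> 3"
  shows "dx i (dx i (\<xi> k)) y u = 0"
proof -
  have "invariant_along 0 (dx 0 (\<xi> k))"
    using assms(1) xi_yz_invariant_along_x by (auto intro: invariant_along_dx)
  moreover have "invariant_along k (dx k (\<xi> k))"
    using assms(1) by (auto intro: dx_diag_xi_invariant_along)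
  moreover have "invariant_along 2 (dx 2 (\<xi> 1))" "invariant_along 1 (dx 1 (\<xi> 2))"
    by (simp_all add: rotation_invariant_along_yz)
  ultimately have "invariant_along i (dx i (\<xi> k))"
    using assms index4_cases[of i] by auto
  then show ?thesis
    by (rule dx_eq_0_if_invariant_along)
qed

lemma dx_t_xi_yz: "dx 3 (\<xi> 1) y u = 0" "dx 3 (\<xi> 2) y u = 0"
  using determining_eq_uy[of y 0] determining_eq_uz[of y 0]
    dx_space_du_phi[of y 0] xi_at_u0(2)[of 3 1 y u] xi_at_u0(2)[of 3 2 y u]
  by (simp_all add: du_dx_phi laplacian_terms_xi_yz)

lemma xi_yz_invariant_along_t: "invariant_along 3 (\<xi> 1)" "invariant_along 3 (\<xi> 2)"
  by (rule invariant_along_if_dx_eq_0[OF differentiable_along_xi]; rule dx_t_xi_yz)+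

definition dilation :: real where
  "dilation = dx 3 (\<xi> 3) 0 0"

definition rotation :: real where
  "rotation = dx 2 (\<xi> 1) 0 0"

lemma dx_t_xi_t: "dx 3 (\<xi> 3) y u = dilation"
  unfolding dilation_def
proof (rule const_if_invariant)
  have "invariant_along 3 (dx 3 (\<xi> 3))"
    by (rule invariant_along_scaled[where c=2, OF _ invariant_along_dx[OF xi_yz_invariant_along_t(1), of 1]])
      (simp add: dx_diag_xi)
  then show "invariant_along i (dx 3 (\<xi> 3))" for i
    using dx_t_xi_t_invariant_along_space by (cases "i = 3") auto
qed (rule invariant_in_u_dx[OF xi_invariant_in_u])

lemma dx_diag_xi_eq_dilation: "i \<noteq> 3 \<Longrightarrow> dx i (\<xi> i) y u = dilation / 2"
  by (simp add: dx_diag_xi dx_t_xi_t)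

lemma dx_z_xi_y: "dx 2 (\<xi> 1) y u = rotation"
  unfolding rotation_def
proof (rule const_if_invariant)
  show "invariant_along i (dx 2 (\<xi> 1))" for i
    using index4_cases[of i] invariant_along_dx[OF xi_yz_invariant_along_x(1)]
      rotation_invariant_along_yz(1) invariant_along_dx[OF xi_yz_invariant_along_t(1)]
    by auto
qed (rule invariant_in_u_dx[OF xi_invariant_in_u])

lemma xi_t_form: "\<xi> 3 y u = \<xi> 3 0 0 + dilation * y$3"
proof -
  have "dx i (\<xi> 3) y u = (if i = 3 then dilation else 0)" for i y u
    using index4_cases[of i] dx_space_xi_t dx_t_xi_t by auto
  from affine_if_dx_const[OF differentiable_along_xi this xi_invariant_in_u, where y=y and u=u]
  show ?thesis by simp
qed

lemma xi_y_form: "\<xi> 1 y u = \<xi> 1 0 0 + dilation / 2 * y$1 + rotation * y$2"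
proof -
  have "dx i (\<xi> 1) y u = (if i = 1 then dilation / 2 else if i = 2 then rotation else 0)" for i y u
    using index4_cases[of i] dx_x_xi_yz(1) dx_diag_xi_eq_dilation dx_z_xi_y dx_t_xi_yz(1) by auto
  from affine_if_dx_const[OF differentiable_along_xi this xi_invariant_in_u, where y=y and u=u]
  show ?thesis by simp
qed

lemma xi_z_form: "\<xi> 2 y u = \<xi> 2 0 0 - rotation * y$1 + dilation / 2 * y$2"
proof -
  have "dx i (\<xi> 2) y u = (if i = 1 then - rotation else if i = 2 then dilation / 2 else 0)" for i y u
    using index4_cases[of i] dx_x_xi_yz(2) dx_diag_xi_eq_dilation xi_space_killing(3) dx_z_xi_y
      dx_t_xi_yz(2)
    by auto
  from affine_if_dx_const[OF differentiable_along_xi this xi_invariant_in_u, where y=y and u=u]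
  show ?thesis by simp
qed

lemma du_phi_eq_dilation: "du \<phi> y u = - dilation / 2"
  by (simp add: du_phi dx_t_xi_t)

text \<open>The coefficient of \<open>u\<close> in the zeroth-order equation.\<close>
lemma dx_x_phi_at_u0: "dx 0 \<phi> y 0 = 0"
proof -
  have "du \<phi> = (\<lambda>_ _. - dilation / 2)"
    by (intro ext) (rule du_phi_eq_dilation)
  moreover have "dx 3 (du \<phi>) y 0 + a * dx 0 \<phi> y 0 + dx 0 (dx 0 (du \<phi>)) y 0
      + dx 1 (dx 1 (du \<phi>)) y 0 + dx 2 (dx 2 (du \<phi>)) y 0 = 0"
    using determining_eq_const[of y 1] determining_eq_const[of y "-1"]
    by (simp add: dx_phi_affine_in_u[where u=1] dx_dx_phi_affine_in_u[where u=1]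
        dx_phi_affine_in_u[where u="-1"] dx_dx_phi_affine_in_u[where u="-1"])
      (simp add: algebra_simps; linarith)
  ultimately have "a * dx 0 \<phi> y 0 = 0"
    by simp
  then show ?thesis
    using a_pos by simp
qed

lemma dx_t_xi_x: "dx 3 (\<xi> 0) y u = a * \<phi> y 0"
proof -
  have "dx 0 (\<xi> 0) = (\<lambda>_ _. dilation / 2)"
    by (intro ext) (simp add: dx_diag_xi_eq_dilation)
  moreover have "dx 1 (dx 1 (\<xi> 0)) y 0 = 0" "dx 2 (dx 2 (\<xi> 0)) y 0 = 0"
    by (rule dx_eq_0_if_invariant_along invariant_along_dx xi_x_invariant_along_yz)+
  ultimately have "dx 3 (\<xi> 0) y 0 = a * \<phi> y 0"
    using determining_eq_ux[where x=y and u=0] dx_space_du_phi(1)[of y 0] by (simp add: du_dx_phi)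
  then show ?thesis
    using xi_at_u0(2)[of 3 0 y u] by simp
qed

lemma phi_at_u0_const: "\<phi> y 0 = \<phi> 0 0"
proof -
  let ?B = "\<lambda>y u. \<phi> y 0"
  have differentiable: "differentiable_along i ?B" for i
    by (rule differentiable_along_at_u0[OF smooth_coeff_differentiable_along[OF smooth_phi]])
  have along_x: "invariant_along 0 ?B"
    by (rule invariant_along_if_dx_eq_0[OF differentiable]) (simp add: dx_at_u0 dx_x_phi_at_u0)
  have along_yz: "invariant_along i ?B" if "i = 1 \<or> i = 2" for i
  proof (rule invariant_along_scaled[where c="1/a" and G="dx 3 (\<xi> 0)"])
    show "invariant_along i (dx 3 (\<xi> 0))"
      using that xi_x_invariant_along_yz by (auto intro: invariant_along_dx)
  qed (use a_pos in \<open>simp add: dx_t_xi_x\<close>)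
  have "dx i (dx i \<phi>) y 0 = 0" if "invariant_along i ?B" for i y
    using dx_eq_0_if_invariant_along[OF invariant_along_dx[OF that]] by (simp add: dx_at_u0)
  then have along_t: "invariant_along 3 ?B"
    using along_x along_yz determining_eq_const[of _ 0]
    by (intro invariant_along_if_dx_eq_0[OF differentiable]) (simp add: dx_at_u0)
  have "?B y 0 = ?B 0 0"
  proof (rule const_if_invariant[where F="?B"])
    show "invariant_along i ?B" for i
      using index4_cases[of i] along_x along_yz along_t by auto
  qed (simp add: invariant_in_u_def)
  then show ?thesis by simp
qed

lemma xi_x_form: "\<xi> 0 y u = \<xi> 0 0 0 + dilation / 2 * y$0 + a * \<phi> 0 0 * y$3"
proof -
  have "dx i (\<xi> 0) y u = (if i = 0 then dilation / 2 else if i = 3 then a * \<phi> 0 0 else 0)" for i y u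
    using index4_cases[of i] dx_diag_xi_eq_dilation dx_yz_xi_x dx_t_xi_x phi_at_u0_const by auto
  from affine_if_dx_const[OF differentiable_along_xi this xi_invariant_in_u, where y=y and u=u]
  show ?thesis by simp
qed

lemma phi_form: "\<phi> y u = \<phi> 0 0 - dilation / 2 * u"
  using phi_affine_in_u[of y u] phi_at_u0_const[of y] du_phi_eq_dilation[of y 0] by simp

lemma generators_affine:
  "\<exists>c1 c2 c3 c4 c5 c6 c7 :: real. \<forall>x u.
        \<xi> 0 x u = c1 * x$0 / 2 + c5 * x$3 + c6
      \<and> \<xi> 1 x u = c1 * x$1 / 2 + c3 * x$2 + c4
      \<and> \<xi> 2 x u = - c3 * x$1 + c1 * x$2 / 2 + c7
      \<and> \<xi> 3 x u = c1 * x$3 + c2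
      \<and> \<phi> x u = - c1 * u / 2 + c5 / a"
proof (intro exI allI conjI)
  fix x u
  show "\<xi> 0 x u = dilation * x$0 / 2 + (a * \<phi> 0 0) * x$3 + \<xi> 0 0 0"
    using xi_x_form[of x u] by simp
  show "\<xi> 1 x u = dilation * x$1 / 2 + rotation * x$2 + \<xi> 1 0 0"
    using xi_y_form[of x u] by simp
  show "\<xi> 2 x u = - rotation * x$1 + dilation * x$2 / 2 + \<xi> 2 0 0"
    using xi_z_form[of x u] by simp
  show "\<xi> 3 x u = dilation * x$3 + \<xi> 3 0 0"
    using xi_t_form[of x u] by simp
  show "\<phi> x u = - dilation * u / 2 + (a * \<phi> 0 0) / a"
    using phi_form[of x u] a_pos by simp
qed

end

section \<open>The seven-parameter family is a symmetry\<close>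

definition affine_coeff :: "(4 \<Rightarrow> real) \<Rightarrow> real \<Rightarrow> real \<Rightarrow> coeff" where
  "affine_coeff k m c x u = (\<Sum>j\<in>UNIV. k j * x$j) + m * u + c"

lemma affine_coeff_along:
  "affine_coeff k m c (y + s *\<^sub>R unit_axis i) v = affine_coeff k m c y v + s * k i"
proof -
  have "(\<Sum>j\<in>UNIV. k j * (y + s *\<^sub>R unit_axis i) $ j)
      = (\<Sum>j\<in>UNIV. k j * y $ j + (if j = i then s * k i else 0))"
    by (intro sum.cong) (auto simp: axis_def algebra_simps)
  then show ?thesis
    by (simp add: affine_coeff_def sum.distrib)
qed

lemma dx_affine_coeff: "dx i (affine_coeff k m c) = (\<lambda>_ _. k i)"
proof (intro ext)
  fix y v
  have "((\<lambda>s. affine_coeff k m c y v + s * k i) has_real_derivative k i) (at 0)"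
    by (auto intro!: derivative_eq_intros)
  then show "dx i (affine_coeff k m c) y v = k i"
    unfolding dx_def affine_coeff_along by (rule DERIV_imp_deriv)
qed

lemma du_affine_coeff: "du (affine_coeff k m c) = (\<lambda>_ _. m)"
proof (intro ext)
  fix y v
  have "(\<lambda>s. affine_coeff k m c y (v + s)) = (\<lambda>s. affine_coeff k m c y v + s * m)"
    by (simp add: affine_coeff_def algebra_simps)
  moreover have "((\<lambda>s. affine_coeff k m c y v + s * m) has_real_derivative m) (at 0)"
    by (auto intro!: derivative_eq_intros)
  ultimately show "du (affine_coeff k m c) y v = m"
    unfolding du_def by (metis DERIV_imp_deriv)
qed

lemma zk_symmetry_if_affine:
  fixes a :: real and \<xi> :: "4 \<Rightarrow> coeff" and \<phi> :: coeff
  assumes "a > 0"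
    and generators: "\<forall>x u.
        \<xi> 0 x u = c1 * x$0 / 2 + c5 * x$3 + c6
      \<and> \<xi> 1 x u = c1 * x$1 / 2 + c3 * x$2 + c4
      \<and> \<xi> 2 x u = - c3 * x$1 + c1 * x$2 / 2 + c7
      \<and> \<xi> 3 x u = c1 * x$3 + c2
      \<and> \<phi> x u = - c1 * u / 2 + c5 / a"
  shows "is_zk_symmetry a \<xi> \<phi>"
proof -
  define K :: "4 \<Rightarrow> 4 \<Rightarrow> real" where
    "K k j = (if k = 0 then (if j = 0 then c1 / 2 else if j = 3 then c5 else 0)
      else if k = 1 then (if j = 1 then c1 / 2 else if j = 2 then c3 else 0)
      else if k = 2 then (if j = 1 then - c3 else if j = 2 then c1 / 2 else 0)
      else (if j = 3 then c1 else 0))" for k j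
  define C :: "4 \<Rightarrow> real" where
    "C k = (if k = 0 then c6 else if k = 1 then c4 else if k = 2 then c7 else c2)" for k
  have xi: "\<xi> k = affine_coeff (K k) 0 (C k)" for k
    using index4_cases[of k] generators
    by (auto simp: fun_eq_iff affine_coeff_def sum_UNIV_4 K_def C_def)
  have phi: "\<phi> = affine_coeff (\<lambda>_. 0) (- c1 / 2) (c5 / a)"
    using generators by (auto simp: fun_eq_iff affine_coeff_def)
  show ?thesis
    unfolding is_zk_symmetry_def
  proof (intro allI impI)
    fix x u u1 u2
    assume "\<forall>i j. u2 i j = (u2 j i :: real)" and "zk_delta a u u1 u2 = 0"
    then have ut: "u1 3 = - (a * u * u1 0 + u2 0 0 + u2 1 1 + u2 2 2)" and u2_sym: "u2 2 1 = u2 1 2"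
      by (auto simp: zk_delta_def)
    show "pr2_zk a \<xi> \<phi> x u u1 u2 = 0"
      unfolding pr2_zk_def phi1_def phi2_def TD1_def TD2_def sum_UNIV_4 xi phi
        dx_affine_coeff du_affine_coeff dx_const du_const
      using \<open>a > 0\<close>
      by (simp add: K_def C_def affine_coeff_def sum_UNIV_4 ut u2_sym) (simp add: algebra_simps)
  qed
qed

theorem mainTheorem1:
  fixes a :: real and \<xi> :: "4 \<Rightarrow> real^4 \<Rightarrow> real \<Rightarrow> real" and \<phi> :: "real^4 \<Rightarrow> real \<Rightarrow> real"
  assumes "a > 0"
    and "\<forall>i. smooth_coeff (\<xi> i)" and "smooth_coeff \<phi>"
  shows "is_zk_symmetry a \<xi> \<phi> \<longleftrightarrow>
    (\<exists>c1 c2 c3 c4 c5 c6 c7 :: real. \<forall>x u.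
        \<xi> 0 x u = c1 * x$0 / 2 + c5 * x$3 + c6
      \<and> \<xi> 1 x u = c1 * x$1 / 2 + c3 * x$2 + c4
      \<and> \<xi> 2 x u = - c3 * x$1 + c1 * x$2 / 2 + c7
      \<and> \<xi> 3 x u = c1 * x$3 + c2
      \<and> \<phi> x u = - c1 * u / 2 + c5 / a)"
  using zk_symmetry.generators_affine[of a \<xi> \<phi>] zk_symmetry_if_affine[OF assms(1), of \<xi>]
    assms unfolding zk_symmetry_def by blast

end
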